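(* Let $t(n)=\operatorname{num}_{\mathcal T}(n,1)$ for $n\ge1$ and $t(0)=1$. Then $t(3n)=t(3n+1)=t(3n+2)$ for all $n\ge0$, and $t(3n)-t(3n-2)=2^{2n}t(n)$ for all $n\ge1$.
   Context: A ternary partition of $n$ is a partition of $n$ (finite nonincreasing sequence of positive integers summing to $n$) all of whose parts are powers of $3$ (including $1$); $\mathcal T(n)$ is the set of ternary partitions of $n$, and $m_\lambda(i)$ the number of parts of $\lambda$ equal to $i$. For $\lambda\in\mathcal T(n)$ let $h_{\mathcal T,\lambda}(x)=\prod_{k\ge0}(1+x^{3^k})^{\lfloor n/3^k\rfloor-m_\lambda(3^k)}$. Let $G_{\mathcal T}(n,x)=\gcd\{h_{\mathcal T,\lambda}(x):\lambda\in\mathcal T(n)\}$ in $\mathbb{Z}[x]$ (normalized with positive leading coefficient), and $\operatorname{num}_{\mathcal T}(n,x)=\frac{1}{G_{\mathcal T}(n,x)}\sum_{\lambda\in\mathcal T(n)}h_{\mathcal T,\lambda}(x)\in\mathbb{Z}[x]$. *)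

theory Defs
  imports "HOL-Computational_Algebra.Computational_Algebra" "HOL-Library.Multiset"
begin

definition ternary_partitions :: "nat \<Rightarrow> nat multiset set" where
  "ternary_partitions n = {M. (\<forall>x\<in>#M. \<exists>k. x = 3 ^ k) \<and> sum_mset M = n}"

text \<open>h_{T,lambda}(x) = prod_{k>=0} (1 + x^(3^k))^(floor(n/3^k) - m_lambda(3^k)).
  For k > n we have 3^k > n, so floor(n/3^k) = 0 = m_lambda(3^k) and the factor is 1;
  hence the product may be taken over k in {0..n}.\<close>
definition h_T :: "nat \<Rightarrow> nat multiset \<Rightarrow> int poly" where
  "h_T n M = (\<Prod>k\<in>{0..n}. ([:1:] + monom 1 (3 ^ k)) ^ (n div 3 ^ k - count M (3 ^ k)))"

definition G_T :: "nat \<Rightarrow> int poly" where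
  "G_T n = Gcd (h_T n ` ternary_partitions n)"

definition num_T :: "nat \<Rightarrow> int poly" where
  "num_T n = (\<Sum>M\<in>ternary_partitions n. h_T n M) div G_T n"

definition t_seq :: "nat \<Rightarrow> int" where
  "t_seq n = (if n = 0 then 1 else poly (num_T n) 1)"

end

theory Submission
  imports Defs
begin

(* Each factor 1 + x^(3^k) is (1 + x) times a polynomial with value 1 at x = 1, so
   h_lambda = (1 + x)^(e_lambda) r_lambda with r_lambda(1) = 1, and e_lambda = e_(1^n) + n - l(lambda)
   is smallest for the all-ones partition 1^n.  Hence the gcd is (1 + x)^(e_(1^n)) times a
   polynomial with value +-1 at x = 1; the sign is + because the normalised gcd has positive
   leading coefficient and divides h_(1^n), which has no real root >= 1.  Therefore
   t(n) = sum_lambda 2^(n - l(lambda)).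

   The number of ones in a ternary partition of n is congruent to n mod 3.  Removing r < 3 ones
   gives t(3n + r) = t(3n); splitting the ternary partitions of 3n into those with at least three
   ones (remove three) and those with none (divide every part by 3) gives
   t(3n) = t(3n - 3) + 4^n t(n). *)

lemma ternary_partition_part: "M \<in> ternary_partitions n \<Longrightarrow> x \<in># M \<Longrightarrow> \<exists>k. x = 3 ^ k"
  by (simp add: ternary_partitions_def)

lemma ternary_partition_size_le:
  assumes "M \<in> ternary_partitions n"
  shows "size M \<le> n"
proof -
  have "size M = (\<Sum>x\<in>#M. 1)" by (rule size_eq_sum_mset)
  also have "\<dots> \<le> (\<Sum>x\<in>#M. x)"
    by (rule sum_mset_mono) (use assms in \<open>auto simp: ternary_partitions_def\<close>)
  finally show ?thesis using assms by (simp add: ternary_partitions_def)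
qed

lemma ternary_partition_part_le:
  assumes "M \<in> ternary_partitions n" "x \<in># M"
  shows "x \<le> n"
  using assms by (auto simp: ternary_partitions_def dest!: multi_member_split)

lemma finite_ternary_partitions: "finite (ternary_partitions n)"
proof (rule finite_subset)
  show "ternary_partitions n \<subseteq> (\<Union>s\<le>n. multisets_of_size {..n} s)"
    by (auto simp: multisets_of_size_def intro: ternary_partition_size_le ternary_partition_part_le)
qed auto

lemma ternary_partitions_0: "ternary_partitions 0 = {{#}}"
  using ternary_partition_size_le[of _ 0] by (auto simp: ternary_partitions_def)

lemma dvd_sum_mset: "(\<And>x. x \<in># M \<Longrightarrow> d dvd x) \<Longrightarrow> (d :: 'a :: comm_semiring_1) dvd sum_mset M"
  by (induction M) auto

lemma ternary_partition_count_1_mod_3: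
  assumes "M \<in> ternary_partitions n"
  shows "count M 1 mod 3 = n mod 3"
proof -
  have "3 dvd x" if "x \<in># filter_mset (\<lambda>x. x \<noteq> 1) M" for x
    using that assms by (auto simp: ternary_partitions_def gr0_conv_Suc)
  then have "3 dvd sum_mset (filter_mset (\<lambda>x. x \<noteq> 1) M)"
    by (rule dvd_sum_mset)
  moreover have "n = sum_mset (filter_mset (\<lambda>x. x = 1) M + filter_mset (\<lambda>x. x \<noteq> 1) M)"
    using assms by (simp add: ternary_partitions_def flip: multiset_partition)
  then have "n = count M 1 + sum_mset (filter_mset (\<lambda>x. x \<noteq> 1) M)"
    by (simp only: sum_mset.union filter_eq_replicate_mset) simp
  ultimately show ?thesis by (auto elim!: dvdE)
qed

lemma replicate_ones_in_ternary_partitions: "replicate_mset n 1 \<in> ternary_partitions n"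
  unfolding ternary_partitions_def by (auto intro: exI[of _ "0::nat"])

lemma ternary_partitions_union:
  "M \<in> ternary_partitions m \<Longrightarrow> N \<in> ternary_partitions n \<Longrightarrow> M + N \<in> ternary_partitions (m + n)"
  by (auto simp: ternary_partitions_def)

lemma bij_betw_add_ones:
  "bij_betw (\<lambda>M. M + replicate_mset r 1) (ternary_partitions m)
     {N \<in> ternary_partitions (m + r). r \<le> count N 1}"
proof (rule bij_betw_byWitness[where f' = "\<lambda>N. N - replicate_mset r 1"])
  show "(\<lambda>M. M + replicate_mset r 1) ` ternary_partitions m
          \<subseteq> {N \<in> ternary_partitions (m + r). r \<le> count N 1}"
    using ternary_partitions_union replicate_ones_in_ternary_partitions by auto
  show "(\<lambda>N. N - replicate_mset r 1) ` {N \<in> ternary_partitions (m + r). r \<le> count N 1}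
          \<subseteq> ternary_partitions m"
  proof clarify
    fix N assume N: "N \<in> ternary_partitions (m + r)" "r \<le> count N 1"
    then have "N = (N - replicate_mset r 1) + replicate_mset r 1"
      by (simp add: count_le_replicate_mset_subset_eq)
    then have "sum_mset N = sum_mset (N - replicate_mset r 1) + r"
      by (metis sum_mset.union sum_mset_replicate_mset mult_1_right of_nat_id)
    with N show "N - replicate_mset r 1 \<in> ternary_partitions m"
      by (auto simp: ternary_partitions_def dest: in_diffD)
  qed
qed (auto simp: count_le_replicate_mset_subset_eq)

lemma ternary_partition_no_ones_part:
  assumes "N \<in> ternary_partitions m" "count N 1 = 0" "x \<in># N"
  shows "\<exists>k. x = 3 * 3 ^ k"
proof -
  obtain k where "x = 3 ^ k" using ternary_partition_part[OF assms(1,3)] ..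
  moreover have "x \<noteq> 1" using assms(2,3) by (auto simp: count_eq_zero_iff)
  ultimately have "x = 3 * 3 ^ (k - 1)" by (cases k) auto
  then show ?thesis ..
qed

lemma ternary_partition_no_ones_div_3:
  assumes "N \<in> ternary_partitions m" "count N 1 = 0"
  shows "image_mset ((*) 3) (image_mset (\<lambda>x. x div 3) N) = N"
proof -
  have "image_mset (\<lambda>x. 3 * (x div 3)) N = image_mset id N"
    by (rule image_mset_cong) (use ternary_partition_no_ones_part[OF assms] in fastforce)
  then show ?thesis by (simp add: multiset.map_comp o_def)
qed

lemma bij_betw_triple_parts:
  "bij_betw (image_mset ((*) 3)) (ternary_partitions n)
     {N \<in> ternary_partitions (3 * n). count N 1 = 0}"
proof (rule bij_betw_byWitness[where f' = "image_mset (\<lambda>x. x div 3)"])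
  show "image_mset ((*) 3) ` ternary_partitions n
          \<subseteq> {N \<in> ternary_partitions (3 * n). count N 1 = 0}"
  proof clarify
    fix M assume M: "M \<in> ternary_partitions n"
    have "\<exists>k. 3 * x = 3 ^ k" if x: "x \<in># M" for x
    proof -
      obtain k where "x = 3 ^ k" using ternary_partition_part[OF M x] ..
      then have "3 * x = 3 ^ Suc k" by simp
      then show ?thesis ..
    qed
    moreover have "sum_mset (image_mset ((*) 3) M) = 3 * n"
      using M sum_mset_distrib_left[of 3 "\<lambda>x. x" M] by (simp add: ternary_partitions_def)
    ultimately show "image_mset ((*) 3) M \<in> ternary_partitions (3 * n) \<and>
        count (image_mset ((*) 3) M) 1 = 0"
      by (auto simp: ternary_partitions_def count_eq_zero_iff)
  qed
  show "image_mset (\<lambda>x. x div 3) ` {N \<in> ternary_partitions (3 * n). count N 1 = 0}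
          \<subseteq> ternary_partitions n"
  proof clarify
    fix N assume N: "N \<in> ternary_partitions (3 * n)" "count N 1 = 0"
    have "3 * sum_mset (image_mset (\<lambda>x. x div 3) N) = sum_mset N"
      by (subst (2) ternary_partition_no_ones_div_3[OF N, symmetric])
         (simp add: sum_mset_distrib_left multiset.map_comp o_def)
    moreover have "\<exists>k. x div 3 = 3 ^ k" if x: "x \<in># N" for x
      using ternary_partition_no_ones_part[OF N x] by auto
    ultimately show "image_mset (\<lambda>x. x div 3) N \<in> ternary_partitions n"
      using N by (auto simp: ternary_partitions_def)
  qed
qed (simp add: multiset.map_comp o_def, use ternary_partition_no_ones_div_3 in blast)

definition ternary_weight :: "nat \<Rightarrow> int" where
  "ternary_weight n = (\<Sum>M\<in>ternary_partitions n. 2 ^ (n - size M))"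

lemma ternary_weight_add_ones:
  "(\<Sum>N\<in>{N \<in> ternary_partitions (m + r). r \<le> count N 1}. (2::int) ^ (m + r - size N))
     = ternary_weight m"
  unfolding ternary_weight_def
  by (subst sum.reindex_bij_betw[OF bij_betw_add_ones, symmetric]) simp

lemma ternary_weight_3n_plus:
  assumes "r < 3"
  shows "ternary_weight (3 * n + r) = ternary_weight (3 * n)"
proof -
  have "r \<le> count N 1" if "N \<in> ternary_partitions (3 * n + r)" for N
  proof -
    have "count N 1 mod 3 = r" using ternary_partition_count_1_mod_3[OF that] assms by simp
    then show ?thesis using mod_less_eq_dividend[of "count N 1" 3] by simp
  qed
  then have "ternary_partitions (3 * n + r) = {N \<in> ternary_partitions (3 * n + r). r \<le> count N 1}"
    by blast
  then show ?thesis
    using ternary_weight_add_ones[of "3 * n" r] by (simp add: ternary_weight_def)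
qed

lemma ternary_weight_3n_rec:
  "ternary_weight (3 * Suc n) = ternary_weight (3 * n) + 2 ^ (2 * Suc n) * ternary_weight (Suc n)"
proof -
  let ?T = "ternary_partitions (3 * Suc n)"
  let ?w = "\<lambda>N. (2::int) ^ (3 * Suc n - size N)"
  let ?A = "{N \<in> ?T. 3 \<le> count N 1}" and ?B = "{N \<in> ?T. count N 1 = 0}"
  have "3 \<le> count N 1 \<or> count N 1 = 0" if "N \<in> ?T" for N
    using ternary_partition_count_1_mod_3[OF that] by presburger
  then have split: "?T = ?A \<union> ?B" by blast
  have "ternary_weight (3 * Suc n) = sum ?w ?T" by (simp add: ternary_weight_def)
  also have "\<dots> = sum ?w ?A + sum ?w ?B"
    by (subst split, rule sum.union_disjoint) (auto simp: finite_ternary_partitions)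
  also have "sum ?w ?A = ternary_weight (3 * n)"
    using ternary_weight_add_ones[of "3 * n" 3] by (simp add: add.commute)
  also have "sum ?w ?B = (\<Sum>M\<in>ternary_partitions (Suc n). ?w (image_mset ((*) 3) M))"
    by (rule sum.reindex_bij_betw[OF bij_betw_triple_parts, symmetric])
  also have "\<dots> = (\<Sum>M\<in>ternary_partitions (Suc n). 2 ^ (2 * Suc n) * 2 ^ (Suc n - size M))"
  proof (intro sum.cong refl)
    fix M assume "M \<in> ternary_partitions (Suc n)"
    then have "3 * Suc n - size (image_mset ((*) 3) M) = 2 * Suc n + (Suc n - size M)"
      using ternary_partition_size_le by fastforce
    then show "?w (image_mset ((*) 3) M) = 2 ^ (2 * Suc n) * 2 ^ (Suc n - size M)"
      by (simp only: power_add)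
  qed
  also have "\<dots> = 2 ^ (2 * Suc n) * ternary_weight (Suc n)"
    by (simp add: ternary_weight_def sum_distrib_left)
  finally show ?thesis .
qed

lemma count_times_le_sum_mset: "count M x * x \<le> sum_mset (M :: nat multiset)"
proof -
  have "count M x * x = (\<Sum>y\<in>#M. if x = y then x else 0)"
    by (simp add: sum_mset_delta')
  also have "\<dots> \<le> (\<Sum>y\<in>#M. y)"
    by (rule sum_mset_mono) auto
  finally show ?thesis by simp
qed

lemma ternary_partition_count_le:
  assumes "M \<in> ternary_partitions n"
  shows "count M (3 ^ k) \<le> n div 3 ^ k"
  using count_times_le_sum_mset[of M "3 ^ k"] assms
  by (simp add: ternary_partitions_def less_eq_div_iff_mult_less_eq)

lemma ternary_partition_size_eq:
  assumes "M \<in> ternary_partitions n"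
  shows "size M = (\<Sum>k\<in>{0..n}. count M (3 ^ k))"
proof -
  have "set_mset M \<subseteq> (\<lambda>k. 3 ^ k) ` {0..n}"
  proof
    fix x assume x: "x \<in># M"
    then obtain k where k: "x = 3 ^ k" using ternary_partition_part[OF assms] by blast
    have "k < 3 ^ k" by (induction k) auto
    also have "\<dots> \<le> n" using ternary_partition_part_le[OF assms x] k by simp
    finally show "x \<in> (\<lambda>k. 3 ^ k) ` {0..n}" using k by auto
  qed
  then have "size M = sum (count M) ((\<lambda>k. 3 ^ k) ` {0..n})"
    unfolding size_multiset_overloaded_eq
    by (intro sum.mono_neutral_left) (auto simp: count_eq_zero_iff)
  also have "\<dots> = (\<Sum>k\<in>{0..n}. count M (3 ^ k))"
    by (subst sum.reindex) (auto intro: inj_onI)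
  finally show ?thesis .
qed

definition h_T_exponent :: "nat \<Rightarrow> nat multiset \<Rightarrow> nat" where
  "h_T_exponent n M = (\<Sum>k\<in>{0..n}. n div 3 ^ k - count M (3 ^ k))"

lemma h_T_exponent_add_size:
  assumes "M \<in> ternary_partitions n"
  shows "h_T_exponent n M + size M = (\<Sum>k\<in>{0..n}. n div 3 ^ k)"
  unfolding h_T_exponent_def ternary_partition_size_eq[OF assms] sum.distrib[symmetric]
  using ternary_partition_count_le[OF assms] by (intro sum.cong) auto

lemma h_T_exponent_eq:
  assumes "M \<in> ternary_partitions n"
  shows "h_T_exponent n M = h_T_exponent n (replicate_mset n 1) + (n - size M)"
  using h_T_exponent_add_size[OF assms] ternary_partition_size_le[OF assms]
    h_T_exponent_add_size[OF replicate_ones_in_ternary_partitions, of n]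
  by simp

lemma one_plus_X_power_odd_factor:
  assumes "odd N"
  shows "\<exists>p :: 'a :: {idom, ring_char_0} poly. [:1:] + monom 1 N = [:1, 1:] * p \<and> poly p 1 = 1"
proof -
  have "poly ([:1:] + monom (1 :: 'a) N) (-1) = 0"
    using assms by (simp add: poly_monom)
  then have "[:- (-1), 1:] dvd [:1:] + monom (1 :: 'a) N"
    by (simp only: poly_eq_0_iff_dvd)
  then have "[:1, 1:] dvd [:1:] + monom (1 :: 'a) N" by simp
  then obtain p where p: "[:1:] + monom (1 :: 'a) N = [:1, 1:] * p" ..
  have "2 * poly p 1 = poly ([:1, 1:] * p) 1" by simp
  also have "\<dots> = 2" unfolding p[symmetric] by (simp add: poly_monom)
  finally have "poly p 1 = 1"
    by (metis mult_cancel_left1 zero_neq_numeral)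
  with p show ?thesis by blast
qed

lemma h_T_factor:
  "\<exists>r. h_T n M = [:1, 1:] ^ h_T_exponent n M * r \<and> poly r 1 = 1"
proof -
  have "\<forall>k. \<exists>q. [:1:] + monom 1 (3 ^ k) = [:1, 1:] * q \<and> poly q 1 = (1 :: int)"
    by (intro allI one_plus_X_power_odd_factor) simp
  from choice[OF this] obtain p :: "nat \<Rightarrow> int poly"
    where p: "\<And>k. [:1:] + monom 1 (3 ^ k) = [:1, 1:] * p k" and p1: "\<And>k. poly (p k) 1 = 1"
    by blast
  let ?e = "\<lambda>k. n div 3 ^ k - count M (3 ^ k)"
  have "h_T n M = (\<Prod>k\<in>{0..n}. [:1, 1:] ^ ?e k * p k ^ ?e k)"
    unfolding h_T_def p power_mult_distrib ..
  also have "\<dots> = [:1, 1:] ^ h_T_exponent n M * (\<Prod>k\<in>{0..n}. p k ^ ?e k)"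
    by (simp add: prod.distrib power_sum h_T_exponent_def)
  finally show ?thesis
    using p1 by (auto simp: poly_prod)
qed

lemma poly_h_T_at_1: "poly (h_T n M) 1 = 2 ^ h_T_exponent n M"
  using h_T_factor[of n M] by auto

lemma map_poly_of_int_add:
  "map_poly (of_int :: int \<Rightarrow> 'a :: comm_ring_1) (p + q) = map_poly of_int p + map_poly of_int q"
  by (rule poly_eqI) (simp add: coeff_map_poly)

lemma map_poly_of_int_mult:
  "map_poly (of_int :: int \<Rightarrow> 'a :: comm_ring_1) (p * q) = map_poly of_int p * map_poly of_int q"
  by (rule poly_eqI) (simp add: coeff_map_poly coeff_mult)

lemma map_poly_of_int_power:
  "map_poly (of_int :: int \<Rightarrow> 'a :: comm_ring_1) (p ^ k) = map_poly of_int p ^ k"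
  by (induction k) (simp_all add: map_poly_of_int_mult)

lemma map_poly_of_int_prod:
  "map_poly (of_int :: int \<Rightarrow> 'a :: comm_ring_1) (\<Prod>i\<in>A. f i) = (\<Prod>i\<in>A. map_poly of_int (f i))"
  by (induction A rule: infinite_finite_induct) (simp_all add: map_poly_of_int_mult)

lemma poly_map_poly_of_int:
  "poly (map_poly (of_int :: int \<Rightarrow> 'a :: comm_ring_1) p) (of_int x) = of_int (poly p x)"
  by (induction p) (simp_all add: map_poly_pCons)

lemma poly_pos_if_no_root_ge:
  fixes p :: "real poly"
  assumes lc: "lead_coeff p > 0" and no_root: "\<And>x. x \<ge> a \<Longrightarrow> poly p x \<noteq> 0"
  shows "poly p a > 0"
proof (rule ccontr)
  assume "\<not> poly p a > 0"
  with no_root have neg: "poly p a < 0" by force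
  obtain b where b: "\<And>x. x \<ge> b \<Longrightarrow> poly p x \<ge> lead_coeff p"
    using poly_pinfty_gt_lc[OF lc] by blast
  have "poly p (max b (a + 1)) > 0"
    using b[of "max b (a + 1)"] lc by simp
  moreover have "a < max b (a + 1)" by simp
  ultimately obtain x where "a < x" "poly p x = 0"
    using poly_IVT_pos[OF _ neg] by blast
  with no_root show False by force
qed

lemma poly_pos_if_dvd_no_root_ge:
  fixes g h :: "int poly"
  assumes "g dvd h" and "lead_coeff g > 0"
    and no_root: "\<And>x :: real. x \<ge> of_int a \<Longrightarrow> poly (map_poly of_int h) x \<noteq> 0"
  shows "poly g a > 0"
proof -
  obtain w where "h = g * w" using assms(1) ..
  then have "poly (map_poly of_int h) x = poly (map_poly of_int g) x * poly (map_poly of_int w) x"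
    for x :: real
    by (simp add: map_poly_of_int_mult)
  then have "poly (map_poly (of_int :: int \<Rightarrow> real) g) x \<noteq> 0" if "x \<ge> of_int a" for x
    using no_root[OF that] by auto
  with assms(2) have "poly (map_poly (of_int :: int \<Rightarrow> real) g) (of_int a) > 0"
    by (intro poly_pos_if_no_root_ge) (subst lead_coeff_map_poly_nz, auto)
  then show ?thesis by (simp add: poly_map_poly_of_int)
qed

lemma poly_h_T_real_pos:
  assumes "x \<ge> (0 :: real)"
  shows "poly (map_poly of_int (h_T n M)) x > 0"
  using assms
  by (auto simp: h_T_def map_poly_of_int_prod map_poly_of_int_power map_poly_of_int_add
      map_poly_monom map_poly_pCons poly_prod poly_monom intro!: prod_pos zero_less_power add_pos_nonneg)

lemma lead_coeff_Gcd_pos: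
  assumes "Gcd A \<noteq> (0 :: int poly)"
  shows "lead_coeff (Gcd A) > 0"
proof -
  have "[:sgn (lead_coeff (Gcd A)):] = 1"
    using unit_factor_Gcd[of A] assms by (simp add: unit_factor_poly_def)
  then show ?thesis by (simp add: one_pCons sgn_1_pos)
qed

lemma poly_G_T_at_1: "poly (G_T n) 1 = 2 ^ h_T_exponent n (replicate_mset n 1)"
proof -
  let ?O = "replicate_mset n 1"
  let ?D = "[:1, 1:] ^ h_T_exponent n ?O :: int poly"
  have G_dvd_O: "G_T n dvd h_T n ?O"
    unfolding G_T_def using replicate_ones_in_ternary_partitions by (intro Gcd_dvd) auto
  have "?D dvd h_T n M" if M: "M \<in> ternary_partitions n" for M
  proof -
    obtain r where "h_T n M = [:1, 1:] ^ h_T_exponent n M * r" using h_T_factor by blast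
    then show ?thesis using h_T_exponent_eq[OF M] by (simp add: power_add mult.assoc)
  qed
  then have "?D dvd G_T n" unfolding G_T_def by (intro Gcd_greatest) auto
  then obtain q where q: "G_T n = ?D * q" ..
  obtain r where r: "h_T n ?O = ?D * r" "poly r 1 = 1" using h_T_factor by blast
  have "q dvd r"
    using G_dvd_O unfolding q r by simp
  then have "poly q 1 dvd 1"
    using r(2) by (metis dvdE dvdI poly_mult)
  then have q1: "poly q 1 = 1 \<or> poly q 1 = -1"
    by (simp add: zdvd1_eq) arith
  have "h_T n ?O \<noteq> 0"
    using poly_h_T_at_1[of n ?O] by auto
  then have "lead_coeff (G_T n) > 0"
    using G_dvd_O unfolding G_T_def by (intro lead_coeff_Gcd_pos) auto
  moreover have "poly (map_poly of_int (h_T n ?O)) x \<noteq> 0" if "x \<ge> (1 :: real)" for x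
    using poly_h_T_real_pos[of x n ?O] that by linarith
  ultimately have "poly (G_T n) 1 > 0"
    using G_dvd_O by (intro poly_pos_if_dvd_no_root_ge) auto
  with q1 show ?thesis unfolding q by auto
qed

lemma poly_num_T_at_1: "poly (num_T n) 1 = ternary_weight n"
proof -
  let ?S = "\<Sum>M\<in>ternary_partitions n. h_T n M"
  let ?e = "h_T_exponent n (replicate_mset n 1)"
  have "G_T n dvd ?S"
    unfolding G_T_def by (intro dvd_sum Gcd_dvd) auto
  then have "?S = G_T n * num_T n"
    by (simp add: num_T_def)
  then have "2 ^ ?e * poly (num_T n) 1 = poly ?S 1"
    by (simp add: poly_G_T_at_1)
  also have "\<dots> = (\<Sum>M\<in>ternary_partitions n. 2 ^ ?e * 2 ^ (n - size M))"
    by (auto simp: poly_sum poly_h_T_at_1 h_T_exponent_eq power_add intro: sum.cong)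
  also have "\<dots> = 2 ^ ?e * ternary_weight n"
    by (simp add: ternary_weight_def sum_distrib_left)
  finally show ?thesis by simp
qed

lemma t_seq_eq_ternary_weight: "t_seq n = ternary_weight n"
  by (simp add: t_seq_def poly_num_T_at_1 ternary_weight_def ternary_partitions_0)

theorem theorem5:
  shows "(\<forall>n::nat. t_seq (3*n) = t_seq (3*n+1) \<and> t_seq (3*n+1) = t_seq (3*n+2))
       \<and> (\<forall>n::nat. n \<ge> 1 \<longrightarrow> t_seq (3*n) - t_seq (3*n-2) = 2^(2*n) * t_seq n)"
proof (intro conjI allI impI)
  fix n :: nat
  show "t_seq (3*n) = t_seq (3*n+1)" "t_seq (3*n+1) = t_seq (3*n+2)"
    using ternary_weight_3n_plus[of 1 n] ternary_weight_3n_plus[of 2 n]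
    by (simp_all add: t_seq_eq_ternary_weight)
next
  fix n :: nat
  assume "n \<ge> 1"
  then obtain m where n: "n = Suc m" by (cases n) auto
  have "3 * n - 2 = 3 * m + 1" unfolding n by simp
  then show "t_seq (3*n) - t_seq (3*n-2) = 2^(2*n) * t_seq n"
    using ternary_weight_3n_rec[of m] ternary_weight_3n_plus[of 1 m]
    by (simp add: t_seq_eq_ternary_weight n)
qed

end
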